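(* Let $K^T \ge 2$, let $\mathcal{D}^T$ be a probability distribution over pairs $(x,y)$ with $x$ in an input space $\mathcal{X}^T$ and $y$ a one-hot vector in $\{0,1\}^{K^T}$, and let $\ell(z,y) = -\sum_{j=1}^{K^T} y_j \log p_j(z)$ be the cross-entropy loss with softmax $p_j(z) = e^{z_j}/\sum_i e^{z_i}$. Let $z_S, z_L : \mathcal{X}^T \to \mathbb{R}^{K^T}$ be measurable logit maps of a service model and a local model before reprogramming, and $z^*_S(\cdot,\mathbf{Q}^* ), z^*_L(\cdot,\mathbf{P}^* ) : \mathcal{X}^T \to \mathbb{R}^{K^T}$ measurable logit maps of the two models after visual reprogramming with fixed prompts $\mathbf{Q}^*$, $\mathbf{P}^*$ respectively. Define the (finite) risks $\mathcal{R}_L(\mathcal{D}^T) = \mathbb{E}_{(x,y)\sim\mathcal{D}^T}[\ell(z_L(x),y)]$, $\mathcal{R}_S(\mathcal{D}^T) = \mathbb{E}[\ell(z_S(x),y)]$, $\mathcal{R}_L(\mathcal{D}^T,\mathbf{P}^* ) = \mathbb{E}[\ell(z^*_L(x,\mathbf{P}^* ),y)]$, $\mathcal{R}_S(\mathcal{D}^T,\mathbf{Q}^* ) = \mathbb{E}[\ell(z^*_S(x,\mathbf{Q}^* ),y)]$. Assume: (a) (service model superiority) $\mathcal{R}_S(\mathcal{D}^T) \le \mathcal{R}_L(\mathcal{D}^T)$ and $\mathcal{R}_S(\mathcal{D}^T,\mathbf{Q}^* ) \le \mathcal{R}_L(\mathcal{D}^T,\mathbf{P}^* )$; (b) ($\epsilon$-faithful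 priming) for some $\epsilon \ge 0$, $\mathbb{E}_{(x,y)\sim\mathcal{D}^T}[\|z_S(x) - z_L(x)\|_1] \le \epsilon$ and $\mathbb{E}_{(x,y)\sim\mathcal{D}^T}[\|z^*_S(x,\mathbf{Q}^* ) - z^*_L(x,\mathbf{P}^* )\|_1] \le \epsilon$. Then (1) $\mathcal{R}_L(\mathcal{D}^T) - \epsilon \le \mathcal{R}_S(\mathcal{D}^T) \le \mathcal{R}_L(\mathcal{D}^T)$, and (2) $\mathcal{R}_L(\mathcal{D}^T,\mathbf{P}^* ) - \epsilon \le \mathcal{R}_S(\mathcal{D}^T,\mathbf{Q}^* ) \le \mathcal{R}_L(\mathcal{D}^T,\mathbf{P}^* )$.
   Context: In the paper's setting, $z^*_S(x,\mathbf{Q}^* ) = \mathcal{F}_S(g_{\mathrm{in}}(x,\mathbf{Q}^* ))$ and $z^*_L(x,\mathbf{P}^* ) = \mathcal{F}_L(g_{\mathrm{in}}(x,\mathbf{P}^* ))$, where $g_{\mathrm{in}}$ is an input transformation and $\mathbf{Q}^*$, $\mathbf{P}^*$ are optimal visual prompts for the service model $\mathcal{F}_S$ and primed local model $\mathcal{F}_L$; for the statement these are simply fixed. $\|\cdot\|_1$ is the $L_1$ norm on $\mathbb{R}^{K^T}$. *)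

theory Defs
  imports "HOL-Probability.Probability"
begin

definition softmax :: "real ^ 'k \<Rightarrow> 'k \<Rightarrow> real" where
  "softmax z j = exp (z $ j) / (\<Sum>i\<in>UNIV. exp (z $ i))"

definition ce_loss :: "real ^ 'k \<Rightarrow> real ^ 'k \<Rightarrow> real" where
  "ce_loss z y = - (\<Sum>j\<in>UNIV. y $ j * ln (softmax z j))"

definition one_hot :: "(real ^ 'k) set" where
  "one_hot = {y. \<exists>c. \<forall>j. y $ j = (if j = c then 1 else 0)}"

definition l1norm :: "real ^ 'k \<Rightarrow> real" where
  "l1norm v = (\<Sum>i\<in>UNIV. \<bar>v $ i\<bar>)"

end

theory Submission
  imports Defs
begin

text \<open>For a one-hot label at class c the cross-entropy is log-sum-exp minus the c-th logit.
  Log-sum-exp grows by at most max_i (a_i - b_i) when the logits change from b to a, so the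
  loss changes by at most max_i (a_i - b_i) - (a_c - b_c), which is bounded by the L1 distance
  of the logits. Integrating this pointwise bound, the risk gap R_L - R_S is at most the expected
  L1 distance, hence at most epsilon; the upper bounds are the superiority hypotheses.\<close>

definition log_sum_exp :: "real ^ 'k \<Rightarrow> real" where
  "log_sum_exp z = ln (\<Sum>i\<in>UNIV. exp (z $ i))"

lemma sum_exp_pos: "(\<Sum>i\<in>UNIV. exp (z $ i)) > 0" for z :: "real ^ 'k"
  by (rule sum_pos) auto

lemma ce_loss_one_hot:
  fixes z y :: "real ^ 'k"
  assumes "\<forall>j. y $ j = (if j = c then 1 else 0)"
  shows "ce_loss z y = log_sum_exp z - z $ c"
proof -
  have "(\<Sum>j\<in>UNIV. y $ j * ln (softmax z j)) = (\<Sum>j\<in>UNIV. if j = c then ln (softmax z j) else 0)"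
    using assms by (intro sum.cong) auto
  also have "\<dots> = ln (softmax z c)"
    by simp
  finally show ?thesis
    unfolding ce_loss_def softmax_def log_sum_exp_def using sum_exp_pos[of z] by (simp add: ln_div)
qed

lemma log_sum_exp_diff_le:
  fixes a b :: "real ^ 'k"
  assumes "\<And>i. a $ i - b $ i \<le> M"
  shows "log_sum_exp a - log_sum_exp b \<le> M"
proof -
  have "(\<Sum>i\<in>UNIV. exp (a $ i)) \<le> (\<Sum>i\<in>UNIV. exp M * exp (b $ i))"
    using assms by (intro sum_mono) (simp add: exp_add[symmetric] algebra_simps)
  also have "\<dots> = exp M * (\<Sum>i\<in>UNIV. exp (b $ i))"
    by (simp add: sum_distrib_left)
  finally have "log_sum_exp a \<le> ln (exp M * (\<Sum>i\<in>UNIV. exp (b $ i)))"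
    unfolding log_sum_exp_def using sum_exp_pos[of a] by simp
  also have "\<dots> = M + log_sum_exp b"
    unfolding log_sum_exp_def using sum_exp_pos[of b] by (simp add: ln_mult)
  finally show ?thesis by simp
qed

lemma diff_le_sum_abs:
  fixes f :: "'a \<Rightarrow> real"
  assumes "finite A" "m \<in> A" "c \<in> A"
  shows "f m - f c \<le> (\<Sum>i\<in>A. \<bar>f i\<bar>)"
proof (cases "m = c")
  case True
  then show ?thesis by (simp add: sum_nonneg)
next
  case False
  then have "f m - f c \<le> (\<Sum>i\<in>{m, c}. \<bar>f i\<bar>)" by simp
  also have "\<dots> \<le> (\<Sum>i\<in>A. \<bar>f i\<bar>)"
    using assms by (intro sum_mono2) auto
  finally show ?thesis .
qed

lemma ce_loss_diff_le_l1norm: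
  fixes a b y :: "real ^ 'k"
  assumes "y \<in> one_hot"
  shows "ce_loss a y - ce_loss b y \<le> l1norm (b - a)"
proof -
  obtain c where c: "\<forall>j. y $ j = (if j = c then 1 else 0)"
    using assms unfolding one_hot_def by auto
  define d where "d i = a $ i - b $ i" for i
  have "Max (range d) \<in> range d"
    by (rule Max_in) auto
  then obtain m where m: "d m = Max (range d)"
    by (metis rangeE)
  have "log_sum_exp a - log_sum_exp b \<le> d m"
    by (rule log_sum_exp_diff_le) (simp add: m d_def[symmetric])
  then have "ce_loss a y - ce_loss b y \<le> d m - d c"
    unfolding ce_loss_one_hot[OF c] d_def by simp
  also have "\<dots> \<le> (\<Sum>i\<in>UNIV. \<bar>d i\<bar>)"
    by (rule diff_le_sum_abs) auto
  also have "\<dots> = l1norm (b - a)"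
    unfolding l1norm_def d_def by (simp add: abs_minus_commute)
  finally show ?thesis .
qed

lemma integral_diff_le_of_AE_le:
  fixes f g h :: "'a \<Rightarrow> real"
  assumes f: "integrable M f" and g: "integrable M g"
    and le: "AE x in M. f x - g x \<le> h x"
    and bound: "(\<integral>\<^sup>+x. ennreal (h x) \<partial>M) \<le> ennreal \<epsilon>" and "0 \<le> \<epsilon>"
  shows "integral\<^sup>L M f - integral\<^sup>L M g \<le> \<epsilon>"
proof -
  have pos_part: "integrable M (\<lambda>x. max 0 (f x - g x))"
    using f g by auto
  have "integral\<^sup>L M f - integral\<^sup>L M g = (\<integral>x. f x - g x \<partial>M)"
    using f g by simp
  also have "\<dots> \<le> (\<integral>x. max 0 (f x - g x) \<partial>M)"
    using f g pos_part by (intro integral_mono) auto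
  finally have gap: "integral\<^sup>L M f - integral\<^sup>L M g \<le> (\<integral>x. max 0 (f x - g x) \<partial>M)" .
  have "ennreal (\<integral>x. max 0 (f x - g x) \<partial>M) = (\<integral>\<^sup>+x. ennreal (max 0 (f x - g x)) \<partial>M)"
    using pos_part by (intro nn_integral_eq_integral[symmetric]) auto
  also have "\<dots> \<le> (\<integral>\<^sup>+x. ennreal (h x) \<partial>M)"
    using le by (intro nn_integral_mono_AE) (auto elim!: eventually_mono simp: ennreal_le_iff2)
  also note bound
  finally have "(\<integral>x. max 0 (f x - g x) \<partial>M) \<le> \<epsilon>"
    using \<open>0 \<le> \<epsilon>\<close> by simp
  with gap show ?thesis by simp
qed

lemma risk_le_of_faithful:
  fixes D :: "('x \<times> (real ^ 'k)) measure" and zL zS :: "'x \<Rightarrow> real ^ 'k"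
  assumes "AE xy in D. snd xy \<in> one_hot"
    and "integrable D (\<lambda>(x, y). ce_loss (zL x) y)" "integrable D (\<lambda>(x, y). ce_loss (zS x) y)"
    and "(\<integral>\<^sup>+(x, y). ennreal (l1norm (zS x - zL x)) \<partial>D) \<le> ennreal \<epsilon>" "0 \<le> \<epsilon>"
  shows "(\<integral>(x, y). ce_loss (zL x) y \<partial>D) - \<epsilon> \<le> (\<integral>(x, y). ce_loss (zS x) y \<partial>D)"
proof -
  have pointwise: "AE xy in D. ce_loss (zL (fst xy)) (snd xy) - ce_loss (zS (fst xy)) (snd xy)
      \<le> l1norm (zS (fst xy) - zL (fst xy))"
    using assms(1) by eventually_elim (rule ce_loss_diff_le_l1norm)
  have bound: "(\<integral>\<^sup>+xy. ennreal (l1norm (zS (fst xy) - zL (fst xy))) \<partial>D) \<le> ennreal \<epsilon>"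
    using assms(4) by (simp add: case_prod_beta')
  have "(\<integral>xy. ce_loss (zL (fst xy)) (snd xy) \<partial>D) - (\<integral>xy. ce_loss (zS (fst xy)) (snd xy) \<partial>D) \<le> \<epsilon>"
    using assms(2,3) by (intro integral_diff_le_of_AE_le[OF _ _ pointwise bound assms(5)])
      (simp_all add: case_prod_beta')
  then show ?thesis
    by (simp add: case_prod_beta')
qed

theorem theorem1:
  fixes MX :: "'x measure"
    and D :: "('x \<times> (real ^ 'k)) measure"
    and zS zL :: "'x \<Rightarrow> real ^ 'k"
    and zSs :: "'x \<Rightarrow> 'q \<Rightarrow> real ^ 'k"
    and zLs :: "'x \<Rightarrow> 'p \<Rightarrow> real ^ 'k"
    and Q :: 'q and P :: 'p and \<epsilon> :: real
  assumes K2: "CARD('k) \<ge> 2"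
    and probD: "prob_space D"
    and setsD: "sets D = sets (MX \<Otimes>\<^sub>M (borel :: (real ^ 'k) measure))"
    and onehot: "AE xy in D. snd xy \<in> one_hot"
    and mS: "zS \<in> borel_measurable MX" and mL: "zL \<in> borel_measurable MX"
    and mSs: "(\<lambda>x. zSs x Q) \<in> borel_measurable MX"
    and mLs: "(\<lambda>x. zLs x P) \<in> borel_measurable MX"
    and iL: "integrable D (\<lambda>(x, y). ce_loss (zL x) y)"
    and iS: "integrable D (\<lambda>(x, y). ce_loss (zS x) y)"
    and iLs: "integrable D (\<lambda>(x, y). ce_loss (zLs x P) y)"
    and iSs: "integrable D (\<lambda>(x, y). ce_loss (zSs x Q) y)"
    and supA: "(\<integral>(x, y). ce_loss (zS x) y \<partial>D) \<le> (\<integral>(x, y). ce_loss (zL x) y \<partial>D)"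
    and supB: "(\<integral>(x, y). ce_loss (zSs x Q) y \<partial>D) \<le> (\<integral>(x, y). ce_loss (zLs x P) y \<partial>D)"
    and eps: "\<epsilon> \<ge> 0"
    and faithA: "(\<integral>\<^sup>+(x, y). ennreal (l1norm (zS x - zL x)) \<partial>D) \<le> ennreal \<epsilon>"
    and faithB: "(\<integral>\<^sup>+(x, y). ennreal (l1norm (zSs x Q - zLs x P)) \<partial>D) \<le> ennreal \<epsilon>"
  shows "(\<integral>(x, y). ce_loss (zL x) y \<partial>D) - \<epsilon> \<le> (\<integral>(x, y). ce_loss (zS x) y \<partial>D)
         \<and> (\<integral>(x, y). ce_loss (zS x) y \<partial>D) \<le> (\<integral>(x, y). ce_loss (zL x) y \<partial>D)
         \<and> (\<integral>(x, y). ce_loss (zLs x P) y \<partial>D) - \<epsilon> \<le> (\<integral>(x, y). ce_loss (zSs x Q) y \<partial>D)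
         \<and> (\<integral>(x, y). ce_loss (zSs x Q) y \<partial>D) \<le> (\<integral>(x, y). ce_loss (zLs x P) y \<partial>D)"
proof -
  \<comment> \<open>The bound is pointwise in the logits.\<close>
  have "(\<integral>(x, y). ce_loss (zL x) y \<partial>D) - \<epsilon> \<le> (\<integral>(x, y). ce_loss (zS x) y \<partial>D)"
    using risk_le_of_faithful[OF onehot iL iS faithA eps] .
  moreover have "(\<integral>(x, y). ce_loss (zLs x P) y \<partial>D) - \<epsilon> \<le> (\<integral>(x, y). ce_loss (zSs x Q) y \<partial>D)"
    using risk_le_of_faithful[where zL = "\<lambda>x. zLs x P" and zS = "\<lambda>x. zSs x Q",
        OF onehot iLs iSs faithB eps] .
  ultimately show ?thesis
    using supA supB by blast
qed

end
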